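(* Let $\mathcal{X}$ be a connected $n$-premaniplex with base flag $x_0$, let $(\mathcal{Y},\eta)$ be an $(n,m)$-voltage operator with $\mathcal{Y}$ connected and base flag $y_0$, let $N=\operatorname{Stab}_{\mathcal{C}^n}(x_0)$, $L=\operatorname{Stab}_{\mathcal{C}^m}(y_0)$, and $\zeta:L\to\mathcal{C}^n$, $\zeta(\omega)=\eta(W_\omega(y_0))$. Suppose $\mathcal{X}\rtimes_\eta\mathcal{Y}$ is connected. Then for $\omega\in\mathcal{C}^m$ there exists an automorphism $\alpha_\omega$ of $\mathcal{X}\rtimes_\eta\mathcal{Y}$ with $(x_0,y_0)\alpha_\omega=\omega(x_0,y_0)$ if and only if $\omega\in\operatorname{N}_{\mathcal{C}^m}(\zeta^{-1}(N))$; moreover $\operatorname{Aut}(\mathcal{X}\rtimes_\eta\mathcal{Y})\cong\operatorname{N}_{\mathcal{C}^m}(\zeta^{-1}(N))/\zeta^{-1}(N)$.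
   Context: An $n$-premaniplex is an edge-coloured graph (semi-edges and parallel edges allowed) with colours $\{0,\dots,n-1\}$ such that every vertex (flag) is the start of exactly one dart of each colour, and for $|i-j|\ge2$ alternating $i,j$-paths of length 4 are closed; $x^i$ is the $i$-adjacent flag of $x$. $\mathcal{C}^n=\langle r_0,\dots,r_{n-1}\mid r_i^2,\ (r_ir_j)^2\ (|i-j|\ge2)\rangle$ acts on the left on flags by $r_ix=x^i$; automorphisms act on the right. $\operatorname{N}_G(H)$ denotes the normaliser. For a flag $y$ of an $m$-premaniplex $\mathcal{Y}$ and $\omega\in\mathcal{C}^m$, $W_\omega(y)$ is the homotopy class of paths from $y$ whose colour sequence $i_1,\dots,i_k$ satisfies $r_{i_k}\cdots r_{i_1}=\omega$; these form the fundamental groupoid $\Pi(\mathcal{Y})$. A voltage assignment $\eta:\Pi(\mathcal{Y})\to\mathcal{C}^n$ satisfies $\eta(W_1W_2)=\eta(W_2)\eta(W_1)$; $(\mathcal{Y},\eta)$ is an $(n,m)$-voltage operator. $\mathcal{X}\rtimes_\eta\mathcal{Y}$ has flags $\mathcal{X}\times\mathcal{Y}$ and $(x,y)^i=(\eta(W_{r_i}(y))x,r_iy)$, $i\in\{0,\dots,m-1\}$; hence $\omega(x,y)=(\eta(W_\omega(y))x,\omega y)$. *)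

theory Defs
  imports "HOL-Algebra.Group_Action"
begin

text \<open>A word [i1,...,ik] represents the element r_i1 r_i2 ... r_ik.\<close>

inductive coxeq :: "nat \<Rightarrow> nat list \<Rightarrow> nat list \<Rightarrow> bool" for n where
  refl: "w \<in> lists {..<n} \<Longrightarrow> coxeq n w w"
| sym: "coxeq n u v \<Longrightarrow> coxeq n v u"
| trans: "coxeq n u v \<Longrightarrow> coxeq n v w \<Longrightarrow> coxeq n u w"
| app: "coxeq n u v \<Longrightarrow> coxeq n u' v' \<Longrightarrow> coxeq n (u @ u') (v @ v')"
| invol: "i < n \<Longrightarrow> coxeq n [i, i] []"
| comm: "i < n \<Longrightarrow> j < n \<Longrightarrow> (i + 2 \<le> j \<or> j + 2 \<le> i) \<Longrightarrow> coxeq n [i, j, i, j] []"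

definition cls :: "nat \<Rightarrow> nat list \<Rightarrow> nat list set" where
  "cls n w = {v. coxeq n w v}"

definition repr :: "nat list set \<Rightarrow> nat list" where
  "repr g = (SOME w. w \<in> g)"

definition Cox :: "nat \<Rightarrow> nat list set monoid" where
  "Cox n = \<lparr>carrier = cls n ` lists {..<n},
            mult = (\<lambda>a b. cls n (repr a @ repr b)),
            one = cls n []\<rparr>"

definition gen :: "nat \<Rightarrow> nat \<Rightarrow> nat list set" where
  "gen n i = cls n [i]"

text \<open>Left action of words: r_i x = adj i x, so [i1,...,ik] acts as r_i1(...(r_ik x)).\<close>
definition act :: "(nat \<Rightarrow> 'a \<Rightarrow> 'a) \<Rightarrow> nat list \<Rightarrow> 'a \<Rightarrow> 'a" where
  "act adj w x = foldr adj w x"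

definition gact :: "(nat \<Rightarrow> 'a \<Rightarrow> 'a) \<Rightarrow> nat list set \<Rightarrow> 'a \<Rightarrow> 'a" where
  "gact adj g x = act adj (repr g) x"

definition premaniplex :: "nat \<Rightarrow> 'a set \<Rightarrow> (nat \<Rightarrow> 'a \<Rightarrow> 'a) \<Rightarrow> bool" where
  "premaniplex n F adj \<longleftrightarrow>
     (\<forall>i<n. \<forall>x\<in>F. adj i x \<in> F \<and> adj i (adj i x) = x) \<and>
     (\<forall>i<n. \<forall>j<n. (i + 2 \<le> j \<or> j + 2 \<le> i) \<longrightarrow>
        (\<forall>x\<in>F. adj i (adj j (adj i (adj j x))) = x))"

definition connected_pm :: "nat \<Rightarrow> 'a set \<Rightarrow> (nat \<Rightarrow> 'a \<Rightarrow> 'a) \<Rightarrow> bool" where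
  "connected_pm n F adj \<longleftrightarrow> (\<forall>x\<in>F. \<forall>y\<in>F. \<exists>w\<in>lists {..<n}. act adj w x = y)"

definition stab :: "nat \<Rightarrow> (nat \<Rightarrow> 'a \<Rightarrow> 'a) \<Rightarrow> 'a \<Rightarrow> nat list set set" where
  "stab n adj x0 = {g \<in> carrier (Cox n). gact adj g x0 = x0}"

text \<open>Automorphism group; automorphisms act on the right: (x)(alpha beta) = ((x)alpha)beta.\<close>
definition Aut :: "nat \<Rightarrow> 'a set \<Rightarrow> (nat \<Rightarrow> 'a \<Rightarrow> 'a) \<Rightarrow> ('a \<Rightarrow> 'a) monoid" where
  "Aut n F adj = \<lparr>carrier = {\<alpha>. bij_betw \<alpha> F F \<and> \<alpha> \<in> extensional F \<and>
                             (\<forall>i<n. \<forall>x\<in>F. \<alpha> (adj i x) = adj i (\<alpha> x))},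
                 mult = (\<lambda>\<alpha> \<beta>. restrict (\<beta> \<circ> \<alpha>) F),
                 one = restrict id F\<rparr>"

text \<open>The fundamental groupoid element W_g(y) is encoded as the pair (y, g), g in C^m;
  it ends at g y and W_g1(y) W_g2(g1 y) = W_(g2 g1)(y).  A voltage assignment eta
  satisfies eta(W1 W2) = eta(W2) eta(W1).\<close>
definition voltage_operator ::
  "nat \<Rightarrow> nat \<Rightarrow> 'b set \<Rightarrow> (nat \<Rightarrow> 'b \<Rightarrow> 'b) \<Rightarrow> ('b \<Rightarrow> nat list set \<Rightarrow> nat list set) \<Rightarrow> bool" where
  "voltage_operator n m Y adjY eta \<longleftrightarrow>
     premaniplex m Y adjY \<and>
     (\<forall>y\<in>Y. \<forall>g\<in>carrier (Cox m). eta y g \<in> carrier (Cox n)) \<and>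
     (\<forall>y\<in>Y. \<forall>g1\<in>carrier (Cox m). \<forall>g2\<in>carrier (Cox m).
        eta y (g2 \<otimes>\<^bsub>Cox m\<^esub> g1) = eta (gact adjY g1 y) g2 \<otimes>\<^bsub>Cox n\<^esub> eta y g1)"

definition mix_adj ::
  "(nat \<Rightarrow> 'a \<Rightarrow> 'a) \<Rightarrow> nat \<Rightarrow> ('b \<Rightarrow> nat list set \<Rightarrow> nat list set) \<Rightarrow> (nat \<Rightarrow> 'b \<Rightarrow> 'b)
    \<Rightarrow> nat \<Rightarrow> 'a \<times> 'b \<Rightarrow> 'a \<times> 'b" where
  "mix_adj adjX m eta adjY i p = (gact adjX (eta (snd p) (gen m i)) (fst p), adjY i (snd p))"

definition zeta_preimage ::
  "nat \<Rightarrow> nat \<Rightarrow> (nat \<Rightarrow> 'a \<Rightarrow> 'a) \<Rightarrow> 'a \<Rightarrow> (nat \<Rightarrow> 'b \<Rightarrow> 'b) \<Rightarrow> 'b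
    \<Rightarrow> ('b \<Rightarrow> nat list set \<Rightarrow> nat list set) \<Rightarrow> nat list set set" where
  "zeta_preimage n m adjX x0 adjY y0 eta = {g \<in> stab m adjY y0. eta y0 g \<in> stab n adjX x0}"

end

theory Submission
  imports Defs "HOL-Algebra.Zassenhaus"
begin

(* The flags of the mix form a C^m-set in which \<omega>(x0, y0) = (\<eta>(W_\<omega>(y0)) x0, \<omega> y0), so the
   stabiliser of the base flag (x0, y0) is \<zeta>^-1(N).  The theorem is therefore an instance of a
   general fact about a connected premaniplex F with base flag b and stabiliser S.
   Automorphisms commute with the action of C^n, hence are determined by the image of b and
   preserve stabilisers.  Since Stab(\<omega> b) = \<omega> S \<omega>^-1, the flag b can be sent to \<omega> b only if
   \<omega> normalises S; conversely, for such \<omega> the map g b \<mapsto> g \<omega> b is well defined and is an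
   automorphism \<alpha>_\<omega>.  The map \<omega> \<mapsto> \<alpha>_\<omega> is then a surjective homomorphism N(S) \<rightarrow> Aut(F)
   with kernel S. *)

section \<open>The universal Coxeter group\<close>

lemma coxeq_lists: "coxeq n u v \<Longrightarrow> u \<in> lists {..<n} \<and> v \<in> lists {..<n}"
  by (induction rule: coxeq.induct) auto

lemma cls_eqI: "coxeq n u v \<Longrightarrow> cls n u = cls n v"
  unfolding cls_def by (auto intro: coxeq.trans coxeq.sym)

lemma coxeq_repr_cls: "u \<in> lists {..<n} \<Longrightarrow> coxeq n u (repr (cls n u))"
  unfolding repr_def cls_def using someI[of "\<lambda>w. w \<in> {v. coxeq n u v}" u] by (simp add: coxeq.refl)

lemma carrier_Cox: "carrier (Cox n) = cls n ` lists {..<n}"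
  by (simp add: Cox_def)

lemma one_Cox: "\<one>\<^bsub>Cox n\<^esub> = cls n []"
  by (simp add: Cox_def)

lemma cls_in_carrier: "u \<in> lists {..<n} \<Longrightarrow> cls n u \<in> carrier (Cox n)"
  by (simp add: carrier_Cox)

lemma gen_in_carrier: "i < n \<Longrightarrow> gen n i \<in> carrier (Cox n)"
  by (simp add: gen_def cls_in_carrier)

lemma repr_in_carrier:
  assumes "g \<in> carrier (Cox n)"
  shows "repr g \<in> lists {..<n}" and "cls n (repr g) = g"
proof -
  obtain u where "u \<in> lists {..<n}" "g = cls n u" using assms by (auto simp: carrier_Cox)
  then show "repr g \<in> lists {..<n}" and "cls n (repr g) = g"
    using coxeq_repr_cls coxeq_lists cls_eqI coxeq.sym by metis+
qed

lemma mult_cls: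
  "u \<in> lists {..<n} \<Longrightarrow> v \<in> lists {..<n} \<Longrightarrow> cls n u \<otimes>\<^bsub>Cox n\<^esub> cls n v = cls n (u @ v)"
  unfolding Cox_def using coxeq_repr_cls by (simp add: cls_eqI coxeq.app coxeq.sym)

lemma cls_Cons: "i < n \<Longrightarrow> w \<in> lists {..<n} \<Longrightarrow> cls n (i # w) = gen n i \<otimes>\<^bsub>Cox n\<^esub> cls n w"
  using mult_cls[of "[i]" n w] by (simp add: gen_def)

lemma coxeq_rev_append: "u \<in> lists {..<n} \<Longrightarrow> coxeq n (rev u @ u) []"
proof (induction u)
  case Nil
  then show ?case by (simp add: coxeq.refl)
next
  case (Cons i u)
  then have "coxeq n (rev u @ ([i, i] @ u)) (rev u @ ([] @ u))"
    by (intro coxeq.app coxeq.refl coxeq.invol) auto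
  then have "coxeq n (rev (i # u) @ (i # u)) (rev u @ u)" by simp
  then show ?case using Cons coxeq.trans by fastforce
qed

lemma group_Cox: "group (Cox n)"
proof (rule groupI)
  show "\<one>\<^bsub>Cox n\<^esub> \<in> carrier (Cox n)" by (simp add: one_Cox cls_in_carrier)
next
  fix x y z assume "x \<in> carrier (Cox n)" "y \<in> carrier (Cox n)" "z \<in> carrier (Cox n)"
  then obtain u v w where "u \<in> lists {..<n}" "v \<in> lists {..<n}" "w \<in> lists {..<n}"
     "x = cls n u" "y = cls n v" "z = cls n w"
    by (auto simp: carrier_Cox)
  then show "x \<otimes>\<^bsub>Cox n\<^esub> y \<in> carrier (Cox n)"
    and "x \<otimes>\<^bsub>Cox n\<^esub> y \<otimes>\<^bsub>Cox n\<^esub> z = x \<otimes>\<^bsub>Cox n\<^esub> (y \<otimes>\<^bsub>Cox n\<^esub> z)"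
    and "\<one>\<^bsub>Cox n\<^esub> \<otimes>\<^bsub>Cox n\<^esub> x = x"
    by (simp_all add: mult_cls one_Cox cls_in_carrier)
  have "rev u \<in> lists {..<n}" using \<open>u \<in> lists {..<n}\<close> by auto
  then show "\<exists>y\<in>carrier (Cox n). y \<otimes>\<^bsub>Cox n\<^esub> x = \<one>\<^bsub>Cox n\<^esub>"
    using \<open>u \<in> lists {..<n}\<close> \<open>x = cls n u\<close>
    by (metis cls_in_carrier mult_cls one_Cox cls_eqI coxeq_rev_append)
qed

section \<open>Premaniplexes as C^n-sets\<close>

lemma act_Nil [simp]: "act adj [] x = x"
  by (simp add: act_def)

lemma act_Cons [simp]: "act adj (i # w) x = adj i (act adj w x)"
  by (simp add: act_def)

lemma act_append: "act adj (u @ v) x = act adj u (act adj v x)"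
  by (simp add: act_def)

lemma (in group) conj_coset_iff:
  assumes "H \<subseteq> carrier G" and g: "g \<in> carrier G"
  shows "h \<in> g <# H #> inv g \<longleftrightarrow> h \<in> carrier G \<and> inv g \<otimes> h \<otimes> g \<in> H"
proof
  assume "h \<in> g <# H #> inv g"
  then obtain s where "s \<in> H" "h = g \<otimes> s \<otimes> inv g"
    unfolding l_coset_def r_coset_def by blast
  moreover have "s \<in> carrier G" using \<open>s \<in> H\<close> assms(1) by blast
  moreover have "inv g \<otimes> (g \<otimes> s \<otimes> inv g) \<otimes> g = s"
    using g \<open>s \<in> carrier G\<close> by (simp add: m_assoc flip: m_assoc [of "inv g" g])
  ultimately have "h \<in> carrier G" and "inv g \<otimes> h \<otimes> g = s"
    using g by simp_all
  then show "h \<in> carrier G \<and> inv g \<otimes> h \<otimes> g \<in> H"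
    using \<open>s \<in> H\<close> by simp
next
  assume h: "h \<in> carrier G \<and> inv g \<otimes> h \<otimes> g \<in> H"
  then have "h = g \<otimes> (inv g \<otimes> h \<otimes> g) \<otimes> inv g"
    using g by (simp add: m_assoc flip: m_assoc [of g "inv g"])
  then show "h \<in> g <# H #> inv g"
    using h unfolding l_coset_def r_coset_def by blast
qed

locale premaniplex_action =
  fixes n :: nat and F :: "'a set" and adj :: "nat \<Rightarrow> 'a \<Rightarrow> 'a"
  assumes premaniplex: "premaniplex n F adj"
begin

sublocale Cox: group "Cox n"
  by (rule group_Cox)

lemma adj_closed: "i < n \<Longrightarrow> x \<in> F \<Longrightarrow> adj i x \<in> F"
  using premaniplex by (simp add: premaniplex_def)

lemma adj_adj: "i < n \<Longrightarrow> x \<in> F \<Longrightarrow> adj i (adj i x) = x"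
  using premaniplex by (simp add: premaniplex_def)

lemma adj_comm:
  "i < n \<Longrightarrow> j < n \<Longrightarrow> i + 2 \<le> j \<or> j + 2 \<le> i \<Longrightarrow> x \<in> F \<Longrightarrow> adj i (adj j (adj i (adj j x))) = x"
  using premaniplex unfolding premaniplex_def by blast

lemma act_closed: "w \<in> lists {..<n} \<Longrightarrow> x \<in> F \<Longrightarrow> act adj w x \<in> F"
  by (induction w) (auto simp: adj_closed)

lemma act_coxeq: "coxeq n u v \<Longrightarrow> x \<in> F \<Longrightarrow> act adj u x = act adj v x"
proof (induction arbitrary: x rule: coxeq.induct)
  case (app u v u' v')
  have "v' \<in> lists {..<n}" using app.hyps(2) coxeq_lists by blast
  then have "act adj v' x \<in> F" using app.prems act_closed by blast
  with app show ?case by (simp add: act_append)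
qed (simp_all add: adj_adj adj_comm)

lemma gact_cls: "u \<in> lists {..<n} \<Longrightarrow> x \<in> F \<Longrightarrow> gact adj (cls n u) x = act adj u x"
  unfolding gact_def using act_coxeq[OF coxeq_repr_cls] by simp

lemma gact_closed: "g \<in> carrier (Cox n) \<Longrightarrow> x \<in> F \<Longrightarrow> gact adj g x \<in> F"
  unfolding gact_def by (rule act_closed[OF repr_in_carrier(1)])

lemma gact_mult:
  assumes "g \<in> carrier (Cox n)" "h \<in> carrier (Cox n)" "x \<in> F"
  shows "gact adj (g \<otimes>\<^bsub>Cox n\<^esub> h) x = gact adj g (gact adj h x)"
proof -
  obtain u v where "u \<in> lists {..<n}" "g = cls n u" "v \<in> lists {..<n}" "h = cls n v"
    using assms by (auto simp: carrier_Cox)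
  with assms act_closed show ?thesis by (simp add: mult_cls gact_cls act_append)
qed

lemma gact_one: "x \<in> F \<Longrightarrow> gact adj \<one>\<^bsub>Cox n\<^esub> x = x"
  by (simp add: one_Cox gact_cls)

lemma gact_gen: "i < n \<Longrightarrow> x \<in> F \<Longrightarrow> gact adj (gen n i) x = adj i x"
  by (simp add: gen_def gact_cls)

lemma gact_inv_gact: "g \<in> carrier (Cox n) \<Longrightarrow> x \<in> F \<Longrightarrow> gact adj (inv\<^bsub>Cox n\<^esub> g) (gact adj g x) = x"
  using gact_mult[of "inv\<^bsub>Cox n\<^esub> g" g x] by (simp add: gact_one)

lemma gact_gact_inv: "g \<in> carrier (Cox n) \<Longrightarrow> x \<in> F \<Longrightarrow> gact adj g (gact adj (inv\<^bsub>Cox n\<^esub> g) x) = x"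
  using gact_mult[of g "inv\<^bsub>Cox n\<^esub> g" x] by (simp add: gact_one)

lemma gact_inv_eq_iff:
  assumes "g \<in> carrier (Cox n)" "x \<in> F" "y \<in> F"
  shows "gact adj (inv\<^bsub>Cox n\<^esub> g) y = x \<longleftrightarrow> y = gact adj g x"
  using assms gact_inv_gact gact_gact_inv by metis

lemma stab_subset: "stab n adj x \<subseteq> carrier (Cox n)"
  by (auto simp: stab_def)

lemma subgroup_stab: "x \<in> F \<Longrightarrow> subgroup (stab n adj x) (Cox n)"
  by (rule Cox.subgroupI)
    (auto simp: stab_def gact_one gact_mult intro!: exI[of _ "\<one>\<^bsub>Cox n\<^esub>"]
      dest: gact_inv_gact[of _ x])

lemma stab_gact:
  assumes g: "g \<in> carrier (Cox n)" and x: "x \<in> F"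
  shows "stab n adj (gact adj g x) = g <#\<^bsub>Cox n\<^esub> stab n adj x #>\<^bsub>Cox n\<^esub> inv\<^bsub>Cox n\<^esub> g"
proof -
  have "h \<in> stab n adj (gact adj g x)
        \<longleftrightarrow> h \<in> carrier (Cox n) \<and> inv\<^bsub>Cox n\<^esub> g \<otimes>\<^bsub>Cox n\<^esub> h \<otimes>\<^bsub>Cox n\<^esub> g \<in> stab n adj x"
    for h
    using g x by (auto simp: stab_def gact_mult gact_closed gact_inv_eq_iff)
  then show ?thesis
    using Cox.conj_coset_iff[OF stab_subset g] by blast
qed

lemma normalizer_stab_iff:
  assumes "x \<in> F"
  shows "\<omega> \<in> normalizer (Cox n) (stab n adj x)
         \<longleftrightarrow> \<omega> \<in> carrier (Cox n) \<and> stab n adj (gact adj \<omega> x) = stab n adj x"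
  using stab_gact[OF _ assms] stab_subset
  by (auto simp: normalizer_def stabilizer_def)

lemma gact_eq_transfer:
  assumes "stab n adj x \<subseteq> stab n adj y" and "x \<in> F" "y \<in> F"
    and g: "g \<in> carrier (Cox n)" and h: "h \<in> carrier (Cox n)"
    and "gact adj g x = gact adj h x"
  shows "gact adj g y = gact adj h y"
proof -
  have "gact adj (inv\<^bsub>Cox n\<^esub> h \<otimes>\<^bsub>Cox n\<^esub> g) x = x"
    using assms gact_inv_gact by (simp add: gact_mult)
  then have "inv\<^bsub>Cox n\<^esub> h \<otimes>\<^bsub>Cox n\<^esub> g \<in> stab n adj x"
    using g h by (simp add: stab_def)
  then have "inv\<^bsub>Cox n\<^esub> h \<otimes>\<^bsub>Cox n\<^esub> g \<in> stab n adj y"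
    using assms(1) by blast
  then have "gact adj (inv\<^bsub>Cox n\<^esub> h) (gact adj g y) = y"
    using assms by (simp add: stab_def gact_mult)
  then show ?thesis
    using gact_gact_inv[OF h, of "gact adj g y"] assms gact_closed by simp
qed

lemma AutI:
  "bij_betw a F F \<Longrightarrow> a \<in> extensional F \<Longrightarrow> (\<And>i x. i < n \<Longrightarrow> x \<in> F \<Longrightarrow> a (adj i x) = adj i (a x))
   \<Longrightarrow> a \<in> carrier (Aut n F adj)"
  by (simp add: Aut_def)

lemma AutD:
  assumes "a \<in> carrier (Aut n F adj)"
  shows "bij_betw a F F" and "a \<in> extensional F"
    and "i < n \<Longrightarrow> x \<in> F \<Longrightarrow> a (adj i x) = adj i (a x)"
  using assms by (auto simp: Aut_def)

lemma mult_Aut: "a \<otimes>\<^bsub>Aut n F adj\<^esub> c = restrict (c \<circ> a) F"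
  by (simp add: Aut_def)

lemma one_Aut: "\<one>\<^bsub>Aut n F adj\<^esub> = restrict id F"
  by (simp add: Aut_def)

lemma Aut_closed: "a \<in> carrier (Aut n F adj) \<Longrightarrow> x \<in> F \<Longrightarrow> a x \<in> F"
  by (rule bij_betw_apply[OF AutD(1)])

lemma Aut_act:
  "a \<in> carrier (Aut n F adj) \<Longrightarrow> w \<in> lists {..<n} \<Longrightarrow> x \<in> F \<Longrightarrow> a (act adj w x) = act adj w (a x)"
proof (induction w)
  case (Cons i w)
  then show ?case using AutD(3)[of a i "act adj w x"] act_closed by simp
qed simp

lemma Aut_gact:
  "a \<in> carrier (Aut n F adj) \<Longrightarrow> g \<in> carrier (Cox n) \<Longrightarrow> x \<in> F \<Longrightarrow> a (gact adj g x) = gact adj g (a x)"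
  unfolding gact_def by (rule Aut_act[OF _ repr_in_carrier(1)])

lemma Aut_mult_closed:
  assumes a: "a \<in> carrier (Aut n F adj)" and c: "c \<in> carrier (Aut n F adj)"
  shows "restrict (c \<circ> a) F \<in> carrier (Aut n F adj)"
proof (rule AutI)
  show "bij_betw (restrict (c \<circ> a) F) F F"
    using bij_betw_trans[OF AutD(1)[OF a] AutD(1)[OF c]] by simp
next
  fix i x assume "i < n" "x \<in> F"
  then show "restrict (c \<circ> a) F (adj i x) = adj i (restrict (c \<circ> a) F x)"
    using AutD(3)[OF a] AutD(3)[OF c] adj_closed Aut_closed[OF a] by simp
qed simp

lemma Aut_inv_closed:
  assumes a: "a \<in> carrier (Aut n F adj)"
  shows "restrict (inv_into F a) F \<in> carrier (Aut n F adj)"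
proof (rule AutI)
  have bij: "bij_betw a F F" using AutD(1)[OF a] .
  then show "bij_betw (restrict (inv_into F a) F) F F"
    by (simp add: bij_betw_inv_into)
  fix i x assume i: "i < n" and x: "x \<in> F"
  define z where "z = inv_into F a x"
  have z: "z \<in> F" "a z = x"
    using bij x by (simp_all add: z_def bij_betw_def inv_into_into f_inv_into_f)
  then have "inv_into F a (adj i x) = adj i z"
    using bij AutD(3)[OF a i] adj_closed[OF i] by (metis bij_betw_def inv_into_f_f)
  then show "restrict (inv_into F a) F (adj i x) = adj i (restrict (inv_into F a) F x)"
    using x adj_closed[OF i x] by (simp add: z_def)
qed simp

lemma group_Aut: "group (Aut n F adj)"
proof (rule groupI)
  show "\<one>\<^bsub>Aut n F adj\<^esub> \<in> carrier (Aut n F adj)"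
    unfolding one_Aut by (rule AutI) (simp_all add: adj_closed bij_betw_def inj_on_def)
next
  fix a c e
  assume a: "a \<in> carrier (Aut n F adj)" and c: "c \<in> carrier (Aut n F adj)"
    and e: "e \<in> carrier (Aut n F adj)"
  show "a \<otimes>\<^bsub>Aut n F adj\<^esub> c \<in> carrier (Aut n F adj)"
    unfolding mult_Aut using a c by (rule Aut_mult_closed)
  show "a \<otimes>\<^bsub>Aut n F adj\<^esub> c \<otimes>\<^bsub>Aut n F adj\<^esub> e = a \<otimes>\<^bsub>Aut n F adj\<^esub> (c \<otimes>\<^bsub>Aut n F adj\<^esub> e)"
    using Aut_closed[OF a] by (auto simp: mult_Aut)
  show "\<one>\<^bsub>Aut n F adj\<^esub> \<otimes>\<^bsub>Aut n F adj\<^esub> a = a"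
    using AutD(2)[OF a] by (auto simp: mult_Aut one_Aut extensional_def)
  have "restrict (inv_into F a) F \<otimes>\<^bsub>Aut n F adj\<^esub> a = \<one>\<^bsub>Aut n F adj\<^esub>"
    using AutD(1)[OF a] by (auto simp: mult_Aut one_Aut bij_betw_def f_inv_into_f)
  with Aut_inv_closed[OF a]
  show "\<exists>y\<in>carrier (Aut n F adj). y \<otimes>\<^bsub>Aut n F adj\<^esub> a = \<one>\<^bsub>Aut n F adj\<^esub>" by blast
qed

lemma stab_Aut_image:
  assumes a: "a \<in> carrier (Aut n F adj)" and x: "x \<in> F"
  shows "stab n adj (a x) = stab n adj x"
proof -
  have "gact adj g (a x) = a x \<longleftrightarrow> gact adj g x = x" if g: "g \<in> carrier (Cox n)" for g
    using Aut_gact[OF a g x] AutD(1)[OF a] x gact_closed[OF g x]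
    by (metis bij_betw_def inj_on_def)
  then show ?thesis by (auto simp: stab_def)
qed

end

section \<open>Automorphisms of a connected premaniplex\<close>

locale connected_premaniplex = premaniplex_action +
  fixes base :: 'a
  assumes connected: "connected_pm n F adj" and base_in: "base \<in> F"
begin

abbreviation "base_stab \<equiv> stab n adj base"
abbreviation "base_normalizer \<equiv> normalizer (Cox n) base_stab"

lemma base_orbitE:
  assumes "x \<in> F"
  obtains g where "g \<in> carrier (Cox n)" "x = gact adj g base"
proof -
  obtain w where "w \<in> lists {..<n}" "act adj w base = x"
    using connected base_in assms unfolding connected_pm_def by blast
  then show ?thesis using that cls_in_carrier gact_cls base_in by metis
qed

lemma Aut_eqI:
  assumes a: "a \<in> carrier (Aut n F adj)" and c: "c \<in> carrier (Aut n F adj)"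
    and "a base = c base"
  shows "a = c"
proof
  fix x show "a x = c x"
  proof (cases "x \<in> F")
    case True
    then obtain g where "g \<in> carrier (Cox n)" "x = gact adj g base" by (rule base_orbitE)
    then show ?thesis using assms by (simp add: Aut_gact base_in)
  next
    case False
    then show ?thesis using AutD(2)[OF a] AutD(2)[OF c] by (simp add: extensional_def)
  qed
qed

text \<open>The automorphism \<alpha>_\<omega> sending g base to g \<omega> base.  The representative g of a flag
  is chosen arbitrarily; for \<omega> in the normaliser the value does not depend on the choice.\<close>

definition aut_of :: "nat list set \<Rightarrow> 'a \<Rightarrow> 'a" where
  "aut_of \<omega> = restrict (\<lambda>x. gact adj (SOME g. g \<in> carrier (Cox n) \<and> gact adj g base = x)
                                   (gact adj \<omega> base)) F"

lemma aut_of_gact: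
  assumes \<omega>: "\<omega> \<in> base_normalizer" and g: "g \<in> carrier (Cox n)"
  shows "aut_of \<omega> (gact adj g base) = gact adj g (gact adj \<omega> base)"
proof -
  have \<omega>_stab: "\<omega> \<in> carrier (Cox n)" "stab n adj (gact adj \<omega> base) = base_stab"
    using \<omega> normalizer_stab_iff[OF base_in] by auto
  define h where "h = (SOME h. h \<in> carrier (Cox n) \<and> gact adj h base = gact adj g base)"
  have h: "h \<in> carrier (Cox n)" "gact adj h base = gact adj g base"
    using someI[of "\<lambda>h. h \<in> carrier (Cox n) \<and> gact adj h base = gact adj g base" g] g
    by (simp_all add: h_def)
  then have "gact adj h (gact adj \<omega> base) = gact adj g (gact adj \<omega> base)"
    using gact_eq_transfer[of base "gact adj \<omega> base" h g] \<omega>_stab g base_in gact_closed by simp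
  then show ?thesis
    using g base_in gact_closed by (simp add: aut_of_def h_def)
qed

lemma aut_of_base: "\<omega> \<in> base_normalizer \<Longrightarrow> aut_of \<omega> base = gact adj \<omega> base"
  using aut_of_gact[of \<omega> "\<one>\<^bsub>Cox n\<^esub>"] base_in normalizer_stab_iff[OF base_in]
  by (simp add: gact_one gact_closed)

lemma aut_of_closed: "\<omega> \<in> base_normalizer \<Longrightarrow> x \<in> F \<Longrightarrow> aut_of \<omega> x \<in> F"
  by (erule base_orbitE)
    (use normalizer_stab_iff[OF base_in] in \<open>simp add: aut_of_gact gact_closed base_in\<close>)

lemma subgroup_base_normalizer: "subgroup base_normalizer (Cox n)"
  by (rule Cox.normalizer_imp_subgroup[OF stab_subset])

lemma aut_of_mult:
  assumes \<omega>: "\<omega> \<in> base_normalizer" and \<nu>: "\<nu> \<in> base_normalizer"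
  shows "aut_of (\<omega> \<otimes>\<^bsub>Cox n\<^esub> \<nu>) = restrict (aut_of \<nu> \<circ> aut_of \<omega>) F"
proof
  fix x
  have carrier: "\<omega> \<in> carrier (Cox n)" "\<nu> \<in> carrier (Cox n)"
    using \<omega> \<nu> subgroup.subset[OF subgroup_base_normalizer] by auto
  have \<omega>\<nu>: "\<omega> \<otimes>\<^bsub>Cox n\<^esub> \<nu> \<in> base_normalizer"
    using \<omega> \<nu> subgroup.m_closed[OF subgroup_base_normalizer] by blast
  show "aut_of (\<omega> \<otimes>\<^bsub>Cox n\<^esub> \<nu>) x = restrict (aut_of \<nu> \<circ> aut_of \<omega>) F x"
  proof (cases "x \<in> F")
    case True
    then obtain g where g: "g \<in> carrier (Cox n)" "x = gact adj g base" by (rule base_orbitE)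
    have "aut_of \<nu> (aut_of \<omega> x) = aut_of \<nu> (gact adj (g \<otimes>\<^bsub>Cox n\<^esub> \<omega>) base)"
      using g carrier base_in by (simp add: aut_of_gact[OF \<omega>] gact_mult)
    also have "\<dots> = gact adj (g \<otimes>\<^bsub>Cox n\<^esub> \<omega>) (gact adj \<nu> base)"
      using g carrier by (simp add: aut_of_gact[OF \<nu>])
    also have "\<dots> = aut_of (\<omega> \<otimes>\<^bsub>Cox n\<^esub> \<nu>) x"
      using g carrier base_in by (simp add: aut_of_gact[OF \<omega>\<nu>] gact_mult gact_closed)
    finally show ?thesis using True by simp
  qed (simp add: aut_of_def)
qed

lemma aut_of_one: "aut_of \<one>\<^bsub>Cox n\<^esub> = restrict id F"
proof
  fix x show "aut_of \<one>\<^bsub>Cox n\<^esub> x = restrict id F x"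
  proof (cases "x \<in> F")
    case True
    then obtain g where "g \<in> carrier (Cox n)" "x = gact adj g base" by (rule base_orbitE)
    then show ?thesis
      using True subgroup.one_closed[OF subgroup_base_normalizer] base_in
      by (simp add: aut_of_gact gact_one)
  qed (simp add: aut_of_def)
qed

lemma aut_of_in_Aut:
  assumes \<omega>: "\<omega> \<in> base_normalizer"
  shows "aut_of \<omega> \<in> carrier (Aut n F adj)"
proof (rule AutI)
  have \<omega>_carrier: "\<omega> \<in> carrier (Cox n)"
    using \<omega> subgroup.subset[OF subgroup_base_normalizer] by auto
  have \<omega>': "inv\<^bsub>Cox n\<^esub> \<omega> \<in> base_normalizer"
    using \<omega> subgroup.m_inv_closed[OF subgroup_base_normalizer] by blast
  have "aut_of (inv\<^bsub>Cox n\<^esub> \<omega>) (aut_of \<omega> x) = x" "aut_of \<omega> (aut_of (inv\<^bsub>Cox n\<^esub> \<omega>) x) = x"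
    if "x \<in> F" for x
    using fun_cong[OF aut_of_mult[OF \<omega> \<omega>'], of x] fun_cong[OF aut_of_mult[OF \<omega>' \<omega>], of x]
      that \<omega>_carrier
    by (simp_all add: aut_of_one)
  then show "bij_betw (aut_of \<omega>) F F"
    using aut_of_closed[OF \<omega>] aut_of_closed[OF \<omega>']
    by (intro bij_betwI[where g = "aut_of (inv\<^bsub>Cox n\<^esub> \<omega>)"]) auto
  show "aut_of \<omega> \<in> extensional F"
    by (simp add: aut_of_def)
  fix i x assume i: "i < n" and x: "x \<in> F"
  from x obtain g where g: "g \<in> carrier (Cox n)" "x = gact adj g base" by (rule base_orbitE)
  have gen: "gen n i \<in> carrier (Cox n)"
    using i by (rule gen_in_carrier)
  have "aut_of \<omega> (adj i x) = aut_of \<omega> (gact adj (gen n i \<otimes>\<^bsub>Cox n\<^esub> g) base)"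
    using g i gen base_in by (simp add: gact_mult gact_gen gact_closed)
  also have "\<dots> = gact adj (gen n i \<otimes>\<^bsub>Cox n\<^esub> g) (gact adj \<omega> base)"
    using g gen by (simp add: aut_of_gact[OF \<omega>])
  also have "\<dots> = adj i (aut_of \<omega> x)"
    using g i gen \<omega>_carrier base_in by (simp add: aut_of_gact[OF \<omega>] gact_mult gact_gen gact_closed)
  finally show "aut_of \<omega> (adj i x) = adj i (aut_of \<omega> x)" .
qed

theorem ex_Aut_base_iff_normalizer:
  assumes "\<omega> \<in> carrier (Cox n)"
  shows "(\<exists>a\<in>carrier (Aut n F adj). a base = gact adj \<omega> base) \<longleftrightarrow> \<omega> \<in> base_normalizer"
  using assms stab_Aut_image[OF _ base_in] aut_of_in_Aut aut_of_base normalizer_stab_iff[OF base_in]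
  by metis

lemma aut_of_hom: "aut_of \<in> hom (Cox n\<lparr>carrier := base_normalizer\<rparr>) (Aut n F adj)"
  by (rule homI) (simp_all add: aut_of_in_Aut aut_of_mult mult_Aut)

lemma aut_of_onto: "aut_of ` base_normalizer = carrier (Aut n F adj)"
proof
  show "aut_of ` base_normalizer \<subseteq> carrier (Aut n F adj)"
    using aut_of_in_Aut by blast
  show "carrier (Aut n F adj) \<subseteq> aut_of ` base_normalizer"
  proof
    fix a assume a: "a \<in> carrier (Aut n F adj)"
    obtain \<omega> where \<omega>: "\<omega> \<in> carrier (Cox n)" "a base = gact adj \<omega> base"
      using Aut_closed[OF a base_in] by (rule base_orbitE)
    then have "\<omega> \<in> base_normalizer"
      using a ex_Aut_base_iff_normalizer by blast
    moreover have "a = aut_of \<omega>"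
      using a \<omega> calculation by (intro Aut_eqI) (simp_all add: aut_of_in_Aut aut_of_base)
    ultimately show "a \<in> aut_of ` base_normalizer" by blast
  qed
qed

lemma kernel_aut_of: "kernel (Cox n\<lparr>carrier := base_normalizer\<rparr>) (Aut n F adj) aut_of = base_stab"
proof -
  have "aut_of \<omega> = \<one>\<^bsub>Aut n F adj\<^esub> \<longleftrightarrow> \<omega> \<in> base_stab" if \<omega>: "\<omega> \<in> base_normalizer" for \<omega>
  proof -
    have "aut_of \<omega> = \<one>\<^bsub>Aut n F adj\<^esub> \<longleftrightarrow> aut_of \<omega> base = \<one>\<^bsub>Aut n F adj\<^esub> base"
      using \<omega> aut_of_in_Aut Aut_eqI group.is_monoid[OF group_Aut] monoid.one_closed by metis
    then show ?thesis
      using \<omega> base_in subgroup.subset[OF subgroup_base_normalizer]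
      by (auto simp: aut_of_base one_Aut stab_def)
  qed
  moreover have "base_stab \<subseteq> base_normalizer"
    using Cox.subgroup_in_normalizer[OF subgroup_stab[OF base_in]] normal_imp_subgroup subgroup.subset
    by fastforce
  ultimately show ?thesis
    by (auto simp: kernel_def)
qed

theorem Aut_iso_normalizer_Mod_stab:
  "Aut n F adj \<cong> (Cox n\<lparr>carrier := base_normalizer\<rparr> Mod base_stab)"
proof -
  interpret normalizer: group "Cox n\<lparr>carrier := base_normalizer\<rparr>"
    by (rule subgroup.subgroup_is_group[OF subgroup_base_normalizer Cox.is_group])
  interpret group_hom "Cox n\<lparr>carrier := base_normalizer\<rparr>" "Aut n F adj" aut_of
    by (intro group_hom.intro group_hom_axioms.intro normalizer.is_group group_Aut aut_of_hom)
  have "Cox n\<lparr>carrier := base_normalizer\<rparr> Mod base_stab \<cong> Aut n F adj"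
    using FactGroup_iso aut_of_onto kernel_aut_of by simp
  moreover have "group (Cox n\<lparr>carrier := base_normalizer\<rparr> Mod base_stab)"
    using normal.factorgroup_is_group Cox.subgroup_in_normalizer[OF subgroup_stab[OF base_in]] by blast
  ultimately show ?thesis
    using group.iso_sym by blast
qed

end

section \<open>The mix of a premaniplex with a voltage operator\<close>

locale voltage_mix =
  fixes X :: "'a set" and adjX :: "nat \<Rightarrow> 'a \<Rightarrow> 'a"
    and Y :: "'b set" and adjY :: "nat \<Rightarrow> 'b \<Rightarrow> 'b"
    and eta :: "'b \<Rightarrow> nat list set \<Rightarrow> nat list set" and n m :: nat
  assumes premaniplex_X: "premaniplex n X adjX"
    and voltage_operator: "voltage_operator n m Y adjY eta"
begin

sublocale X: premaniplex_action n X adjX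
  by (rule premaniplex_action.intro[OF premaniplex_X])

sublocale Y: premaniplex_action m Y adjY
  using voltage_operator by (simp add: voltage_operator_def premaniplex_action_def)

abbreviation mix :: "nat \<Rightarrow> 'a \<times> 'b \<Rightarrow> 'a \<times> 'b" where
  "mix \<equiv> mix_adj adjX m eta adjY"

lemma eta_closed: "y \<in> Y \<Longrightarrow> g \<in> carrier (Cox m) \<Longrightarrow> eta y g \<in> carrier (Cox n)"
  using voltage_operator by (simp add: voltage_operator_def)

lemma eta_mult:
  "y \<in> Y \<Longrightarrow> g \<in> carrier (Cox m) \<Longrightarrow> h \<in> carrier (Cox m) \<Longrightarrow>
   eta y (h \<otimes>\<^bsub>Cox m\<^esub> g) = eta (gact adjY g y) h \<otimes>\<^bsub>Cox n\<^esub> eta y g"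
  using voltage_operator unfolding voltage_operator_def by blast

lemma eta_one:
  assumes y: "y \<in> Y"
  shows "eta y \<one>\<^bsub>Cox m\<^esub> = \<one>\<^bsub>Cox n\<^esub>"
proof -
  have "eta y \<one>\<^bsub>Cox m\<^esub> \<otimes>\<^bsub>Cox n\<^esub> eta y \<one>\<^bsub>Cox m\<^esub> = \<one>\<^bsub>Cox n\<^esub> \<otimes>\<^bsub>Cox n\<^esub> eta y \<one>\<^bsub>Cox m\<^esub>"
    using eta_mult[OF y, of "\<one>\<^bsub>Cox m\<^esub>" "\<one>\<^bsub>Cox m\<^esub>"] eta_closed[OF y] y
    by (simp add: Y.gact_one)
  then show ?thesis
    using X.Cox.right_cancel eta_closed[OF y] by simp
qed

lemma act_mix:
  "w \<in> lists {..<m} \<Longrightarrow> x \<in> X \<Longrightarrow> y \<in> Y \<Longrightarrow>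
   act mix w (x, y) = (gact adjX (eta y (cls m w)) x, act adjY w y)"
proof (induction w)
  case Nil
  then show ?case by (simp add: eta_one X.gact_one flip: one_Cox)
next
  case (Cons i w)
  then have i: "i < m" and w: "w \<in> lists {..<m}" by auto
  have "eta y (cls m (i # w)) = eta (act adjY w y) (gen m i) \<otimes>\<^bsub>Cox n\<^esub> eta y (cls m w)"
    using Cons.prems i w by (simp add: cls_Cons eta_mult cls_in_carrier gen_in_carrier Y.gact_cls)
  then show ?case
    using Cons i w
    by (simp add: mix_adj_def X.gact_mult eta_closed cls_in_carrier gen_in_carrier Y.act_closed)
qed

lemma gact_mix:
  "g \<in> carrier (Cox m) \<Longrightarrow> x \<in> X \<Longrightarrow> y \<in> Y \<Longrightarrow>
   gact mix g (x, y) = (gact adjX (eta y g) x, gact adjY g y)"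
  by (simp add: gact_def [of mix] gact_def [of adjY] act_mix repr_in_carrier)

lemma act_mix_coxeq: "coxeq m u v \<Longrightarrow> p \<in> X \<times> Y \<Longrightarrow> act mix u p = act mix v p"
  using coxeq_lists cls_eqI Y.act_coxeq by (fastforce simp: act_mix)

lemma premaniplex_mix: "premaniplex m (X \<times> Y) mix"
  unfolding premaniplex_def
proof (intro conjI allI impI ballI)
  fix i p assume i: "i < m" and p: "p \<in> X \<times> Y"
  show "mix i p \<in> X \<times> Y"
    using p i X.gact_closed eta_closed gen_in_carrier Y.adj_closed by (auto simp: mix_adj_def)
  show "mix i (mix i p) = p"
    using act_mix_coxeq[OF coxeq.invol[OF i] p] by simp
next
  fix i j p assume "i < m" "j < m" "i + 2 \<le> j \<or> j + 2 \<le> i" and p: "p \<in> X \<times> Y"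
  then show "mix i (mix j (mix i (mix j p))) = p"
    using act_mix_coxeq[OF coxeq.comm p] by simp
qed

lemma stab_mix:
  "x0 \<in> X \<Longrightarrow> y0 \<in> Y \<Longrightarrow> stab m mix (x0, y0) = zeta_preimage n m adjX x0 adjY y0 eta"
  by (auto simp: stab_def zeta_preimage_def gact_mix eta_closed)

end

theorem corollary5p3:
  fixes X :: "'a set" and adjX :: "nat \<Rightarrow> 'a \<Rightarrow> 'a" and x0 :: 'a
    and Y :: "'b set" and adjY :: "nat \<Rightarrow> 'b \<Rightarrow> 'b" and y0 :: 'b
    and eta :: "'b \<Rightarrow> nat list set \<Rightarrow> nat list set" and n m :: nat
  assumes "premaniplex n X adjX" and "connected_pm n X adjX" and "x0 \<in> X"
    and "voltage_operator n m Y adjY eta" and "connected_pm m Y adjY" and "y0 \<in> Y"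
    and "connected_pm m (X \<times> Y) (mix_adj adjX m eta adjY)"
  shows "(\<forall>\<omega>\<in>carrier (Cox m).
            (\<exists>\<alpha>\<in>carrier (Aut m (X \<times> Y) (mix_adj adjX m eta adjY)).
               \<alpha> (x0, y0) = gact (mix_adj adjX m eta adjY) \<omega> (x0, y0))
            \<longleftrightarrow> \<omega> \<in> normalizer (Cox m) (zeta_preimage n m adjX x0 adjY y0 eta))
         \<and> Aut m (X \<times> Y) (mix_adj adjX m eta adjY) \<cong>
             ((Cox m)\<lparr>carrier := normalizer (Cox m) (zeta_preimage n m adjX x0 adjY y0 eta)\<rparr>
               Mod (zeta_preimage n m adjX x0 adjY y0 eta))"
proof -
  interpret voltage_mix X adjX Y adjY eta n m
    using assms(1,4) by (rule voltage_mix.intro)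
  interpret mix: connected_premaniplex m "X \<times> Y" mix "(x0, y0)"
    using premaniplex_mix assms(3,6,7)
    by (intro connected_premaniplex.intro connected_premaniplex_axioms.intro premaniplex_action.intro) auto
  show ?thesis
    using mix.ex_Aut_base_iff_normalizer mix.Aut_iso_normalizer_Mod_stab
    by (simp add: stab_mix assms(3,6))
qed

end
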